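(* Let $(\Omega,\mathcal{M})$ be a measurable space, $f\in\mathcal{F}_1(a,b)$, and $w_0=f'_+(1)$ (the right derivative of $f$ at $1$). Suppose $w_0$ lies in the interior of $\{f^*<\infty\}$ and $f$ is strictly convex on a neighborhood of $1$. If $P_n,P$ are probability measures on $\Omega$ and either $D_f(P_n\|P)\to0$ or $D_f(P\|P_n)\to0$, then $P_n\to P$ setwise, i.e. $P_n(A)\to P(A)$ for all $A\in\mathcal{M}$. If moreover $\Omega$ is a metric space and $\mathcal{M}$ its Borel $\sigma$-algebra, then $P_n\to P$ weakly.
   Context: For $-\infty\le a<1<b\le\infty$, $\mathcal{F}_1(a,b)$ is the set of convex functions $f:(a,b)\to\mathbb{R}$ with $f(1)=0$; $f$ is extended to $[a,b]$ by continuity and set to $\infty$ outside $[a,b]$. The $f$-divergence of probability measures is $D_f(\nu\|\mu)=E_\mu[f(d\nu/d\mu)]$ if $\nu\ll\mu$ and $\infty$ otherwise. $f^*(y)=\sup_{z}\{yz-f(z)\}$ is the Legendre transform of $f$. *)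

theory Defs
  imports "HOL-Probability.Probability"
begin

definition ioo :: "ereal \<Rightarrow> ereal \<Rightarrow> real set" where
  "ioo a b = {x. a < ereal x \<and> ereal x < b}"

definition F1 :: "ereal \<Rightarrow> ereal \<Rightarrow> (real \<Rightarrow> real) \<Rightarrow> bool" where
  "F1 a b f \<longleftrightarrow> a < 1 \<and> 1 < b \<and> convex_on (ioo a b) f \<and> f 1 = 0"

definition fext :: "ereal \<Rightarrow> ereal \<Rightarrow> (real \<Rightarrow> real) \<Rightarrow> real \<Rightarrow> ereal" where
  "fext a b f x =
     (if x \<in> ioo a b then ereal (f x)
      else if ereal x = a then Lim (at_right x) (\<lambda>t. ereal (f t))
      else if ereal x = b then Lim (at_left x) (\<lambda>t. ereal (f t))
      else \<infinity>)"

definition legendre :: "ereal \<Rightarrow> ereal \<Rightarrow> (real \<Rightarrow> real) \<Rightarrow> real \<Rightarrow> ereal" where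
  "legendre a b f y = (SUP z. ereal (y * z) - fext a b f z)"

definition right_deriv :: "(real \<Rightarrow> real) \<Rightarrow> real \<Rightarrow> real" where
  "right_deriv f x = Lim (at_right x) (\<lambda>t. (f t - f x) / (t - x))"

definition strictly_convex_on :: "real set \<Rightarrow> (real \<Rightarrow> real) \<Rightarrow> bool" where
  "strictly_convex_on S f \<longleftrightarrow>
     (\<forall>x\<in>S. \<forall>y\<in>S. \<forall>u::real. x \<noteq> y \<and> 0 < u \<and> u < 1 \<longrightarrow>
        f (u * x + (1 - u) * y) < u * f x + (1 - u) * f y)"

text \<open>f-divergence D_f(nu || mu) = E_mu[f(d nu / d mu)] if nu << mu, infinity otherwise.\<close>
definition fdiv :: "ereal \<Rightarrow> ereal \<Rightarrow> (real \<Rightarrow> real) \<Rightarrow> 'a measure \<Rightarrow> 'a measure \<Rightarrow> ereal" where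
  "fdiv a b f \<nu> \<mu> =
     (if absolutely_continuous \<mu> \<nu> then
        (let g = (\<lambda>x. fext a b f (enn2real (RN_deriv \<mu> \<nu> x))) in
          enn2ereal (\<integral>\<^sup>+ x. e2ennreal (max 0 (g x)) \<partial>\<mu>)
          - enn2ereal (\<integral>\<^sup>+ x. e2ennreal (max 0 (- g x)) \<partial>\<mu>))
      else \<infinity>)"

definition metric_borel_sets :: "'a set \<Rightarrow> ('a \<Rightarrow> 'a \<Rightarrow> real) \<Rightarrow> 'a set set" where
  "metric_borel_sets S d = sigma_sets S {U. openin (Metric_space.mtopology S d) U}"

definition weak_conv_metric ::
  "'a set \<Rightarrow> ('a \<Rightarrow> 'a \<Rightarrow> real) \<Rightarrow> (nat \<Rightarrow> 'a measure) \<Rightarrow> 'a measure \<Rightarrow> bool" where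
  "weak_conv_metric S d Pn P \<longleftrightarrow>
     (\<forall>g. continuous_map (Metric_space.mtopology S d) euclideanreal g \<and>
          bounded (g ` S) \<longrightarrow>
          (\<lambda>n. \<integral>x. g x \<partial>Pn n) \<longlonglongrightarrow> (\<integral>x. g x \<partial>P))"

end

theory Submission
  imports Defs
begin

text \<open>
  Let \<open>s\<close> be a subgradient of \<open>f\<close> at 1. Strict convexity near 1 gives, for every \<open>d > 0\<close>,
  some \<open>c > 0\<close> such that the extended \<open>f\<close> dominates the hinge \<open>s (t - 1) + c (\<bar>t - 1\<bar> - d)\<close>
  on the whole real line. Integrating with \<open>t = d\<nu>/d\<mu>\<close> kills the linear term, so
  \<open>D\<^sub>f(\<nu>\<parallel>\<mu>) \<ge> c (\<parallel>d\<nu>/d\<mu> - 1\<parallel>\<^sub>1 - d) \<ge> c (\<bar>\<nu> A - \<mu> A\<bar> - d)\<close>, and \<open>D\<^sub>f \<rightarrow> 0\<close> in either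
  order forces setwise convergence. Setwise convergence gives convergence of the integrals of
  bounded measurable functions (approximate them uniformly by step functions), in particular of
  bounded continuous ones.
\<close>

section \<open>Convex functions of a real variable\<close>

lemma convex_on_real_subgradient:
  fixes f :: "real \<Rightarrow> real"
  assumes cv: "convex_on I f" and x: "x \<in> I"
    and p: "p \<in> I" "p < x" and q: "q \<in> I" "x < q"
  shows "\<exists>s. \<forall>t\<in>I. f x + s * (t - x) \<le> f t"
proof -
  \<comment> \<open>The supremum of the left difference quotients at \<open>x\<close> is a subgradient.\<close>
  define L where "L = (\<lambda>t. (f t - f x) / (t - x)) ` {t\<in>I. t < x}"
  have slope_le: "(f t - f x) / (t - x) \<le> (f u - f x) / (u - x)"
    if "t \<in> I" "t < x" "u \<in> I" "x < u" for t u
  proof -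
    have "(f t - f x) / (t - x) \<le> (f t - f u) / (t - u)"
      using convex_on_slope_le(1)[OF cv that(1,3), of x] that by simp
    also have "\<dots> \<le> (f x - f u) / (x - u)"
      using convex_on_slope_le(2)[OF cv that(1,3), of x] that by simp
    also have "\<dots> = (f u - f x) / (u - x)"
      by (metis minus_diff_eq minus_divide_divide)
    finally show ?thesis .
  qed
  have ne: "L \<noteq> {}" using p by (auto simp: L_def)
  have bdd: "bdd_above L"
    using slope_le q by (auto simp: L_def intro!: bdd_aboveI[of _ "(f q - f x) / (q - x)"])
  show ?thesis
  proof (intro exI ballI)
    fix t assume t: "t \<in> I"
    consider "t < x" | "t = x" | "x < t" by linarith
    then show "f x + Sup L * (t - x) \<le> f t"
    proof cases
      case 1
      then have "(f t - f x) / (t - x) \<le> Sup L"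
        using t bdd by (auto simp: L_def intro!: cSup_upper)
      then show ?thesis using 1 by (simp add: divide_le_eq algebra_simps)
    next
      case 2
      then show ?thesis by simp
    next
      case 3
      then have "Sup L \<le> (f t - f x) / (t - x)"
        using t ne slope_le by (auto simp: L_def intro!: cSup_least)
      then show ?thesis using 3 by (simp add: le_divide_eq algebra_simps)
    qed
  qed
qed

lemma convex_on_diff_line:
  fixes f :: "real \<Rightarrow> real"
  assumes "convex_on I f"
  shows "convex_on I (\<lambda>t. f t - s * (t - x))"
proof (rule convex_on_diff[OF assms])
  have "convex I" using assms by (rule convex_on_imp_convex)
  then show "concave_on I (\<lambda>t. s * (t - x))"
    by (auto simp: concave_on_def convex_on_def algebra_simps) (simp flip: distrib_right)
qed

lemma convex_on_chord_le:
  fixes h :: "real \<Rightarrow> real"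
  assumes cv: "convex_on I h" and x: "x \<in> I" and y: "y \<in> I"
    and c: "x \<le> c" "c \<le> y" and xy: "x < y"
  shows "h c * (y - x) \<le> (y - c) * h x + (c - x) * h y"
proof -
  define u where "u = (c - x) / (y - x)"
  have u: "0 \<le> u" "u \<le> 1" using c xy by (auto simp: u_def field_simps)
  have ux: "u * (y - x) = c - x" using xy by (simp add: u_def)
  then have "(1 - u) *\<^sub>R x + u *\<^sub>R y = c" by (simp add: algebra_simps)
  then have "h c \<le> (1 - u) * h x + u * h y" using convex_onD[OF cv u x y] by simp
  then have "h c * (y - x) \<le> ((1 - u) * h x + u * h y) * (y - x)"
    using xy by (intro mult_right_mono) auto
  also have "\<dots> = ((1 - u) * (y - x)) * h x + (u * (y - x)) * h y"
    by (simp add: algebra_simps)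
  also have "(1 - u) * (y - x) = y - c" using ux by (simp add: algebra_simps)
  finally show ?thesis by (simp only: ux)
qed

lemma convex_on_antimono_below_minimum:
  fixes h :: "real \<Rightarrow> real"
  assumes cv: "convex_on I h" and m: "m \<in> I" "\<forall>t\<in>I. h m \<le> h t"
    and pq: "p \<in> I" "q \<in> I" "p \<le> q" "q \<le> m"
  shows "h q \<le> h p"
proof (cases "p < q \<and> q < m")
  case True
  have "(h p - h q) / (p - q) \<le> (h p - h m) / (p - m)"
    using convex_on_slope_le(1)[OF cv pq(1) m(1), of q] True by simp
  also have "\<dots> \<le> 0"
    using m pq True by (intro divide_nonneg_neg) auto
  finally show ?thesis using True by (simp add: divide_le_0_iff)
next
  case False
  then show ?thesis using m pq by auto
qed

lemma convex_on_mono_above_minimum: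
  fixes h :: "real \<Rightarrow> real"
  assumes cv: "convex_on I h" and m: "m \<in> I" "\<forall>t\<in>I. h m \<le> h t"
    and pq: "p \<in> I" "q \<in> I" "m \<le> p" "p \<le> q"
  shows "h p \<le> h q"
proof (cases "m < p \<and> p < q")
  case True
  have "0 \<le> (h m - h q) / (m - q)"
    using m pq True by (intro divide_nonpos_neg) auto
  also have "\<dots> \<le> (h p - h q) / (p - q)"
    using convex_on_slope_le(2)[OF cv m(1) pq(2), of p] True by simp
  finally show ?thesis using True by (simp add: zero_le_divide_iff)
next
  case False
  then show ?thesis using m pq by auto
qed

lemma convex_on_hinge_minorant:
  fixes h :: "real \<Rightarrow> real"
  assumes cv: "convex_on I h" and nonneg: "\<forall>t\<in>I. 0 \<le> h t" and m: "m \<in> I" "h m = 0"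
    and d: "0 < d" "m - d \<in> I" "m + d \<in> I" and t: "t \<in> I"
  shows "min (h (m - d)) (h (m + d)) / d * (\<bar>t - m\<bar> - d) \<le> h t"
proof -
  define c where "c = min (h (m - d)) (h (m + d)) / d"
  have c: "0 \<le> c" using nonneg d by (simp add: c_def)
  consider "\<bar>t - m\<bar> \<le> d" | "m + d < t" | "t < m - d" by linarith
  then have "c * (\<bar>t - m\<bar> - d) \<le> h t"
  proof cases
    case 1
    then have "c * (\<bar>t - m\<bar> - d) \<le> 0" using c by (intro mult_nonneg_nonpos) auto
    then show ?thesis using nonneg t by auto
  next
    case 2
    have "h (m + d) * (t - m) \<le> (t - (m + d)) * h m + (m + d - m) * h t"
      using convex_on_chord_le[OF cv m(1) t, of "m + d"] 2 d by simp
    then have chord: "h (m + d) * (t - m) \<le> d * h t" using m(2) by simp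
    have "c * (\<bar>t - m\<bar> - d) \<le> c * (t - m)" using 2 c d by (intro mult_left_mono) auto
    also have "\<dots> \<le> h (m + d) / d * (t - m)"
      using 2 d by (intro mult_right_mono) (auto simp: c_def intro!: divide_right_mono)
    also have "\<dots> \<le> h t" using chord d by (simp add: divide_le_eq mult.commute)
    finally show ?thesis .
  next
    case 3
    have "h (m - d) * (m - t) \<le> (m - (m - d)) * h t + (m - d - t) * h m"
      using convex_on_chord_le[OF cv t m(1), of "m - d"] 3 d by simp
    then have chord: "h (m - d) * (m - t) \<le> d * h t" using m(2) by simp
    have "c * (\<bar>t - m\<bar> - d) \<le> c * (m - t)" using 3 c d by (intro mult_left_mono) auto
    also have "\<dots> \<le> h (m - d) / d * (m - t)"
      using 3 d by (intro mult_right_mono) (auto simp: c_def intro!: divide_right_mono)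
    also have "\<dots> \<le> h t" using chord d by (simp add: divide_le_eq mult.commute)
    finally show ?thesis .
  qed
  then show ?thesis by (simp add: c_def)
qed

lemma strictly_convex_on_exceeds_supporting_line:
  assumes sc: "strictly_convex_on S f" and x: "x \<in> S" "x + d \<in> S" and d: "d \<noteq> 0"
    and mid: "f x + s * (d / 2) \<le> f (x + d / 2)"
  shows "f x + s * d < f (x + d)"
proof -
  have chord: "f (u * x + (1 - u) * (x + d)) < u * f x + (1 - u) * f (x + d)"
    if "0 < u" "u < 1" for u
    using sc x d that unfolding strictly_convex_on_def by auto
  have "f ((1 / 2) * x + (1 - 1 / 2) * (x + d)) < (1 / 2) * f x + (1 - 1 / 2) * f (x + d)"
    by (rule chord) auto
  moreover have "(1 / 2) * x + (1 - 1 / 2) * (x + d) = x + d / 2" by (simp add: field_simps)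
  ultimately have "f (x + d / 2) < (1 / 2) * f x + (1 - 1 / 2) * f (x + d)" by metis
  then have "2 * f (x + d / 2) < f x + f (x + d)" by simp
  moreover have "s * d = 2 * (s * (d / 2))" by simp
  ultimately show ?thesis using mid by linarith
qed

lemma mono_tendsto_at_left_ereal:
  fixes g :: "real \<Rightarrow> ereal"
  assumes xy: "x < y" and mono: "\<And>p q. x < p \<Longrightarrow> p \<le> q \<Longrightarrow> q < y \<Longrightarrow> g p \<le> g q"
  shows "\<exists>L. (g \<longlongrightarrow> L) (at_left y)"
proof -
  have "(g \<longlongrightarrow> Sup (g ` ({..<y} \<inter> {x<..}))) (at y within ({..<y} \<inter> {x<..}))"
    by (rule Lim_left_bound[where K = \<infinity>]) (auto intro: mono)
  moreover have "at y within ({..<y} \<inter> {x<..}) = at_left y"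
    by (rule at_within_nhd[of y "{x<..}"]) (use xy in auto)
  ultimately show ?thesis by auto
qed

lemma antimono_tendsto_at_right_ereal:
  fixes g :: "real \<Rightarrow> ereal"
  assumes xy: "x < y" and antimono: "\<And>p q. x < p \<Longrightarrow> p \<le> q \<Longrightarrow> q < y \<Longrightarrow> g q \<le> g p"
  shows "\<exists>L. (g \<longlongrightarrow> L) (at_right x)"
proof -
  have "\<exists>L. ((\<lambda>t. g (- t)) \<longlongrightarrow> L) (at_left (- x))"
    using xy by (intro mono_tendsto_at_left_ereal[of "- y"]) (auto intro: antimono)
  then show ?thesis by (simp add: filterlim_at_left_to_right)
qed

lemma tendsto_ereal_add_convergent:
  fixes h g :: "'a \<Rightarrow> real"
  assumes h: "((\<lambda>t. ereal (h t)) \<longlongrightarrow> L) F" and F: "F \<noteq> bot"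
    and nonneg: "eventually (\<lambda>t. 0 \<le> h t) F" and g: "(g \<longlongrightarrow> l) F"
  shows "\<exists>L'. ((\<lambda>t. ereal (h t + g t)) \<longlongrightarrow> L') F"
proof -
  have "0 \<le> L"
    using nonneg by (intro tendsto_lowerbound[OF h _ F]) (auto elim: eventually_mono)
  then have "((\<lambda>t. ereal (h t) + ereal (g t)) \<longlongrightarrow> L + ereal l) F"
    by (intro tendsto_add_ereal_nonneg h tendsto_ereal g) auto
  then show ?thesis by auto
qed

lemma F1_mem_ioo_below_one: "F1 a b f \<Longrightarrow> a < ereal t \<Longrightarrow> t \<le> 1 \<Longrightarrow> t \<in> ioo a b"
  using le_less_trans[of "ereal t" 1 b] by (auto simp: F1_def ioo_def one_ereal_def)

lemma F1_mem_ioo_above_one: "F1 a b f \<Longrightarrow> 1 \<le> t \<Longrightarrow> ereal t < b \<Longrightarrow> t \<in> ioo a b"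
  using less_le_trans[of a 1 "ereal t"] by (auto simp: F1_def ioo_def one_ereal_def)

lemma F1_one_mem_ioo: "F1 a b f \<Longrightarrow> 1 \<in> ioo a b"
  by (rule F1_mem_ioo_below_one) (auto simp: F1_def one_ereal_def)

lemma open_ioo: "open (ioo a b)"
proof -
  have "ioo a b = ereal -` {a<..<b}" by (auto simp: ioo_def)
  then show ?thesis by (simp add: open_ereal_vimage)
qed

lemma F1_neighbourhood_of_one:
  assumes "F1 a b f"
  obtains r where "r > 0" "\<And>t. \<bar>t - 1\<bar> < r \<Longrightarrow> t \<in> ioo a b"
  using open_ioo[of a b] F1_one_mem_ioo[OF assms] unfolding open_real by blast

lemma F1_subgradient:
  assumes F: "F1 a b f"
  shows "\<exists>s. \<forall>t\<in>ioo a b. s * (t - 1) \<le> f t"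
proof -
  obtain r where r: "r > 0" "\<And>t. \<bar>t - 1\<bar> < r \<Longrightarrow> t \<in> ioo a b"
    using F1_neighbourhood_of_one[OF F] by blast
  have "\<exists>s. \<forall>t\<in>ioo a b. f 1 + s * (t - 1) \<le> f t"
    using F r by (intro convex_on_real_subgradient[of _ _ _ "1 - r / 2" "1 + r / 2"])
      (auto simp: F1_def F1_one_mem_ioo)
  then show ?thesis using F by (simp add: F1_def)
qed

lemma F1_minus_supporting_line:
  assumes F: "F1 a b f" and sub: "\<forall>t\<in>ioo a b. s * (t - 1) \<le> f t"
  shows "convex_on (ioo a b) (\<lambda>t. f t - s * (t - 1))"
    and "\<forall>t\<in>ioo a b. 0 \<le> f t - s * (t - 1)" and "f 1 - s * (1 - 1) = 0"
  using F sub by (auto simp: F1_def intro: convex_on_diff_line)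

text \<open>\<open>fext\<close> takes \<open>Lim\<close> at finite endpoints, which is junk unless the limit exists.\<close>

lemma F1_tendsto_at_lower_endpoint:
  assumes F: "F1 a b f" and a: "a = ereal x"
  shows "\<exists>L. ((\<lambda>t. ereal (f t)) \<longlongrightarrow> L) (at_right x)"
proof -
  obtain s where sub: "\<forall>t\<in>ioo a b. s * (t - 1) \<le> f t"
    using F1_subgradient[OF F] by blast
  define h where "h t = f t - s * (t - 1)" for t
  note h = F1_minus_supporting_line[OF F sub, folded h_def]
  have x1: "x < 1" using F a by (simp add: F1_def one_ereal_def)
  have I: "t \<in> ioo a b" if "x < t" "t \<le> 1" for t
    using F1_mem_ioo_below_one[OF F] that a by simp
  have "\<exists>L. ((\<lambda>t. ereal (h t)) \<longlongrightarrow> L) (at_right x)"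
  proof (rule antimono_tendsto_at_right_ereal[OF x1])
    fix p q assume "x < p" "p \<le> q" "q < 1"
    then show "ereal (h q) \<le> ereal (h p)"
      using convex_on_antimono_below_minimum[OF h(1) F1_one_mem_ioo[OF F]] h(2,3) I by simp
  qed
  then obtain L where L: "((\<lambda>t. ereal (h t)) \<longlongrightarrow> L) (at_right x)" by blast
  have "eventually (\<lambda>t. 0 \<le> h t) (at_right x)"
    unfolding eventually_at_right[OF x1] using h(2) I x1 by auto
  moreover have "((\<lambda>t. s * (t - 1)) \<longlongrightarrow> s * (x - 1)) (at_right x)"
    by (intro tendsto_intros)
  ultimately have "\<exists>L'. ((\<lambda>t. ereal (h t + s * (t - 1))) \<longlongrightarrow> L') (at_right x)"
    by (intro tendsto_ereal_add_convergent[OF L]) auto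
  then show ?thesis by (simp add: h_def)
qed

lemma F1_tendsto_at_upper_endpoint:
  assumes F: "F1 a b f" and b: "b = ereal y"
  shows "\<exists>L. ((\<lambda>t. ereal (f t)) \<longlongrightarrow> L) (at_left y)"
proof -
  obtain s where sub: "\<forall>t\<in>ioo a b. s * (t - 1) \<le> f t"
    using F1_subgradient[OF F] by blast
  define h where "h t = f t - s * (t - 1)" for t
  note h = F1_minus_supporting_line[OF F sub, folded h_def]
  have y1: "1 < y" using F b by (simp add: F1_def one_ereal_def)
  have I: "t \<in> ioo a b" if "1 \<le> t" "t < y" for t
    using F1_mem_ioo_above_one[OF F] that b by simp
  have "\<exists>L. ((\<lambda>t. ereal (h t)) \<longlongrightarrow> L) (at_left y)"
  proof (rule mono_tendsto_at_left_ereal[OF y1])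
    fix p q assume "1 < p" "p \<le> q" "q < y"
    then show "ereal (h p) \<le> ereal (h q)"
      using convex_on_mono_above_minimum[OF h(1) F1_one_mem_ioo[OF F]] h(2,3) I by simp
  qed
  then obtain L where L: "((\<lambda>t. ereal (h t)) \<longlongrightarrow> L) (at_left y)" by blast
  have "eventually (\<lambda>t. 0 \<le> h t) (at_left y)"
    unfolding eventually_at_left[OF y1] using h(2) I y1 by auto
  moreover have "((\<lambda>t. s * (t - 1)) \<longlongrightarrow> s * (y - 1)) (at_left y)"
    by (intro tendsto_intros)
  ultimately have "\<exists>L'. ((\<lambda>t. ereal (h t + s * (t - 1))) \<longlongrightarrow> L') (at_left y)"
    by (intro tendsto_ereal_add_convergent[OF L]) auto
  then show ?thesis by (simp add: h_def)
qed

lemma fext_ge_continuous_minorant: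
  assumes F: "F1 a b f" and G: "continuous_on UNIV G" and le: "\<forall>t\<in>ioo a b. G t \<le> f t"
  shows "ereal (G t) \<le> fext a b f t"
proof -
  have Lim_ge: "ereal (G t) \<le> Lim (at t within S) (\<lambda>u. ereal (f u))"
    if lim: "\<exists>L. ((\<lambda>u. ereal (f u)) \<longlongrightarrow> L) (at t within S)" and nontriv: "at t within S \<noteq> bot"
      and ev: "eventually (\<lambda>u. G u \<le> f u) (at t within S)" for S
  proof -
    obtain L where L: "((\<lambda>u. ereal (f u)) \<longlongrightarrow> L) (at t within S)" using lim by blast
    have "isCont G t" using G continuous_on_eq_continuous_at open_UNIV UNIV_I by metis
    then have "(G \<longlongrightarrow> G t) (at t within S)"
      unfolding isCont_def by (rule tendsto_within_subset) simp
    then have "((\<lambda>u. ereal (G u)) \<longlongrightarrow> ereal (G t)) (at t within S)" by (rule tendsto_ereal)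
    moreover have "eventually (\<lambda>u. ereal (G u) \<le> ereal (f u)) (at t within S)"
      using ev by (auto elim: eventually_mono)
    ultimately have "ereal (G t) \<le> L" by (rule tendsto_le[OF nontriv L])
    then show ?thesis using tendsto_Lim[OF nontriv L] by simp
  qed
  have a1: "ereal t = a \<Longrightarrow> t < 1" and b1: "ereal t = b \<Longrightarrow> 1 < t"
    using F by (auto simp: F1_def one_ereal_def)
  consider "t \<in> ioo a b" | "t \<notin> ioo a b" "ereal t = a" | "t \<notin> ioo a b" "ereal t \<noteq> a" "ereal t = b"
    | "t \<notin> ioo a b" "ereal t \<noteq> a" "ereal t \<noteq> b" by blast
  then show ?thesis
  proof cases
    case 1
    then show ?thesis using le by (simp add: fext_def)
  next
    case 2
    have "eventually (\<lambda>u. G u \<le> f u) (at_right t)"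
      unfolding eventually_at_right[OF a1[OF 2(2)]]
    proof (intro exI[of _ 1] conjI allI impI a1[OF 2(2)])
      fix u assume "t < u" "u < 1"
      then have "u \<in> ioo a b" using F1_mem_ioo_below_one[OF F] 2(2) by auto
      then show "G u \<le> f u" using le by blast
    qed
    then have "ereal (G t) \<le> Lim (at_right t) (\<lambda>u. ereal (f u))"
      by (intro Lim_ge F1_tendsto_at_lower_endpoint[OF F 2(2)[symmetric]]) simp
    then show ?thesis using 2 by (simp add: fext_def)
  next
    case 3
    have "eventually (\<lambda>u. G u \<le> f u) (at_left t)"
      unfolding eventually_at_left[OF b1[OF 3(3)]]
    proof (intro exI[of _ 1] conjI allI impI b1[OF 3(3)])
      fix u assume "u < t" "1 < u"
      then have "u \<in> ioo a b" using F1_mem_ioo_above_one[OF F] 3(3) by auto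
      then show "G u \<le> f u" using le by blast
    qed
    then have "ereal (G t) \<le> Lim (at_left t) (\<lambda>u. ereal (f u))"
      by (intro Lim_ge F1_tendsto_at_upper_endpoint[OF F 3(3)[symmetric]]) simp
    then show ?thesis using 3 by (simp add: fext_def)
  next
    case 4
    then show ?thesis by (simp add: fext_def)
  qed
qed

lemma F1_hinge_minorant:
  assumes F: "F1 a b f" and strict: "\<exists>e>0. strictly_convex_on {1 - e<..<1 + e} f"
  shows "\<exists>s. \<forall>d>0. \<exists>c>0. \<forall>t. ereal (s * (t - 1) + c * (\<bar>t - 1\<bar> - d)) \<le> fext a b f t"
proof -
  obtain s where sub: "\<forall>t\<in>ioo a b. s * (t - 1) \<le> f t"
    using F1_subgradient[OF F] by blast
  define h where "h t = f t - s * (t - 1)" for t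
  note h = F1_minus_supporting_line[OF F sub, folded h_def]
  have f1: "f 1 = 0" using F by (simp add: F1_def)
  obtain e where e: "e > 0" "strictly_convex_on {1 - e<..<1 + e} f" using strict by blast
  obtain r where r: "r > 0" "\<And>t. \<bar>t - 1\<bar> < r \<Longrightarrow> t \<in> ioo a b"
    using F1_neighbourhood_of_one[OF F] by blast
  have h_pos: "0 < h (1 + \<delta>)" if "\<delta> \<noteq> 0" "\<bar>\<delta>\<bar> < min e r" for \<delta>
  proof -
    have "\<bar>1 + \<delta> / 2 - 1\<bar> < r" using that r(1) by auto
    then have "1 + \<delta> / 2 \<in> ioo a b" by (rule r(2))
    then have "s * (1 + \<delta> / 2 - 1) \<le> f (1 + \<delta> / 2)" using sub by blast
    then have "f 1 + s * (\<delta> / 2) \<le> f (1 + \<delta> / 2)" using f1 by simp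
    then have "f 1 + s * \<delta> < f (1 + \<delta>)"
      using e(1) that by (intro strictly_convex_on_exceeds_supporting_line[OF e(2)]) auto
    then show ?thesis using f1 by (simp add: h_def)
  qed
  show ?thesis
  proof (rule exI[of _ s], intro allI impI)
    fix d :: real assume d: "0 < d"
    define \<delta> where "\<delta> = min d (min e r / 2)"
    have \<delta>: "0 < \<delta>" "\<delta> \<le> d" "\<delta> < min e r" using d e r by (auto simp: \<delta>_def)
    define c where "c = min (h (1 - \<delta>)) (h (1 + \<delta>)) / \<delta>"
    have c: "0 < c" using h_pos[of \<delta>] h_pos[of "- \<delta>"] \<delta> by (simp add: c_def)
    have \<delta>_ioo: "1 - \<delta> \<in> ioo a b" "1 + \<delta> \<in> ioo a b" using r(2) \<delta> by auto
    have "s * (t - 1) + c * (\<bar>t - 1\<bar> - d) \<le> f t" if t: "t \<in> ioo a b" for t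
    proof -
      have "c * (\<bar>t - 1\<bar> - d) \<le> c * (\<bar>t - 1\<bar> - \<delta>)"
        using c \<delta> by (intro mult_left_mono) auto
      also have "\<dots> \<le> h t"
        unfolding c_def using \<delta> h(2,3) t \<delta>_ioo
        by (intro convex_on_hinge_minorant[OF h(1) _ F1_one_mem_ioo[OF F]]) auto
      finally show ?thesis by (simp add: h_def)
    qed
    moreover have "continuous_on UNIV (\<lambda>t. s * (t - 1) + c * (\<bar>t - 1\<bar> - d))"
      by (intro continuous_intros)
    ultimately have "ereal (s * (t - 1) + c * (\<bar>t - 1\<bar> - d)) \<le> fext a b f t" for t
      using fext_ge_continuous_minorant[OF F, of "\<lambda>t. s * (t - 1) + c * (\<bar>t - 1\<bar> - d)"] by blast
    then show "\<exists>c>0. \<forall>t. ereal (s * (t - 1) + c * (\<bar>t - 1\<bar> - d)) \<le> fext a b f t"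
      using c by blast
  qed
qed

section \<open>Lower bounds for the f-divergence\<close>

lemma e2ennreal_max_0: "e2ennreal (max 0 x) = e2ennreal x"
  by (cases "x \<le> 0") (auto simp: e2ennreal_neg max_def)

lemma fdiv_ge_integral:
  assumes ac: "absolutely_continuous \<mu> \<nu>" and k: "integrable \<mu> k"
    and le: "\<And>x. x \<in> space \<mu> \<Longrightarrow> ereal (k x) \<le> fext a b f (enn2real (RN_deriv \<mu> \<nu> x))"
  shows "ereal (\<integral>x. k x \<partial>\<mu>) \<le> fdiv a b f \<nu> \<mu>"
proof -
  define g where "g x = fext a b f (enn2real (RN_deriv \<mu> \<nu> x))" for x
  obtain p q where pq: "0 \<le> p" "0 \<le> q"
    "(\<integral>\<^sup>+x. ennreal (k x) \<partial>\<mu>) = ennreal p" "(\<integral>\<^sup>+x. ennreal (- k x) \<partial>\<mu>) = ennreal q"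
    "(\<integral>x. k x \<partial>\<mu>) = p - q"
    using integrableE[OF k] by metis
  have pos: "ennreal p \<le> (\<integral>\<^sup>+x. e2ennreal (max 0 (g x)) \<partial>\<mu>)"
    unfolding pq(3)[symmetric]
  proof (rule nn_integral_mono)
    fix x assume "x \<in> space \<mu>"
    then have "e2ennreal (ereal (k x)) \<le> e2ennreal (g x)"
      using le by (intro e2ennreal_mono) (simp add: g_def)
    then show "ennreal (k x) \<le> e2ennreal (max 0 (g x))" by (simp add: e2ennreal_max_0)
  qed
  have neg: "(\<integral>\<^sup>+x. e2ennreal (max 0 (- g x)) \<partial>\<mu>) \<le> ennreal q"
    unfolding pq(4)[symmetric]
  proof (rule nn_integral_mono)
    fix x assume "x \<in> space \<mu>"
    then have "- g x \<le> ereal (- k x)"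
      using le by (simp add: g_def ereal_uminus_le_reorder)
    then have "e2ennreal (- g x) \<le> e2ennreal (ereal (- k x))" by (rule e2ennreal_mono)
    then show "e2ennreal (max 0 (- g x)) \<le> ennreal (- k x)" by (simp add: e2ennreal_max_0)
  qed
  have "ereal (\<integral>x. k x \<partial>\<mu>) = enn2ereal (ennreal p) - enn2ereal (ennreal q)"
    using pq by simp
  also have "\<dots> \<le> enn2ereal (\<integral>\<^sup>+x. e2ennreal (max 0 (g x)) \<partial>\<mu>)
      - enn2ereal (\<integral>\<^sup>+x. e2ennreal (max 0 (- g x)) \<partial>\<mu>)"
    using pos neg by (intro ereal_minus_mono) (simp_all add: less_eq_ennreal.rep_eq)
  also have "\<dots> = fdiv a b f \<nu> \<mu>"
    using ac by (simp add: fdiv_def g_def Let_def)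
  finally show ?thesis .
qed

lemma has_bochner_integral_RN_deriv_indicator:
  assumes \<mu>: "sigma_finite_measure \<mu>" and \<nu>: "finite_measure \<nu>" and sets: "sets \<nu> = sets \<mu>"
    and ac: "absolutely_continuous \<mu> \<nu>" and A: "A \<in> sets \<mu>"
  shows "has_bochner_integral \<mu> (\<lambda>x. enn2real (RN_deriv \<mu> \<nu> x) * indicator A x) (measure \<nu> A)"
proof -
  interpret \<mu>: sigma_finite_measure \<mu> by fact
  interpret \<nu>: finite_measure \<nu> by fact
  have A\<nu>: "A \<in> sets \<nu>" using A sets by simp
  have \<nu>A: "has_bochner_integral \<nu> (indicator A) (measure \<nu> A)"
    using A\<nu> by (intro has_bochner_integral_real_indicator) (auto simp: less_top[symmetric])
  have m: "(indicator A :: 'a \<Rightarrow> real) \<in> borel_measurable \<mu>" using A by simp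
  note RN = \<mu>.RN_deriv_integrable[OF \<nu>.sigma_finite_measure_axioms ac sets m]
    \<mu>.RN_deriv_integral[OF \<nu>.sigma_finite_measure_axioms ac sets m]
  show ?thesis
    using \<nu>A RN unfolding has_bochner_integral_iff by simp
qed

lemma has_bochner_integral_RN_deriv:
  assumes \<mu>: "sigma_finite_measure \<mu>" and \<nu>: "finite_measure \<nu>" and sets: "sets \<nu> = sets \<mu>"
    and ac: "absolutely_continuous \<mu> \<nu>"
  shows "has_bochner_integral \<mu> (\<lambda>x. enn2real (RN_deriv \<mu> \<nu> x)) (measure \<nu> (space \<nu>))"
proof -
  have "has_bochner_integral \<mu> (\<lambda>x. enn2real (RN_deriv \<mu> \<nu> x) * indicator (space \<mu>) x)
      (measure \<nu> (space \<mu>))"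
    by (intro has_bochner_integral_RN_deriv_indicator assms) simp
  then have "has_bochner_integral \<mu> (\<lambda>x. enn2real (RN_deriv \<mu> \<nu> x)) (measure \<nu> (space \<mu>))"
    by (rule has_bochner_integral_cong[OF refl _ refl, THEN iffD1, rotated]) simp
  then show ?thesis using sets_eq_imp_space_eq[OF sets] by simp
qed

lemma measure_diff_le_L1_RN_deriv:
  assumes \<mu>: "prob_space \<mu>" and \<nu>: "prob_space \<nu>" and sets: "sets \<nu> = sets \<mu>"
    and ac: "absolutely_continuous \<mu> \<nu>" and A: "A \<in> sets \<mu>"
  shows "\<bar>measure \<nu> A - measure \<mu> A\<bar> \<le> (\<integral>x. \<bar>enn2real (RN_deriv \<mu> \<nu> x) - 1\<bar> \<partial>\<mu>)"
proof -
  interpret \<mu>: prob_space \<mu> by fact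
  interpret \<nu>: prob_space \<nu> by fact
  define r where "r x = enn2real (RN_deriv \<mu> \<nu> x)" for x
  have "has_bochner_integral \<mu> (\<lambda>x. r x * indicator A x - indicator A x) (measure \<nu> A - measure \<mu> A)"
    unfolding r_def using A
    by (intro has_bochner_integral_diff has_bochner_integral_RN_deriv_indicator
        has_bochner_integral_real_indicator sets ac)
      (auto simp: \<mu>.sigma_finite_measure_axioms \<nu>.finite_measure_axioms less_top[symmetric])
  then have int: "integrable \<mu> (\<lambda>x. (r x - 1) * indicator A x)"
    and eq: "measure \<nu> A - measure \<mu> A = (\<integral>x. (r x - 1) * indicator A x \<partial>\<mu>)"
    by (simp_all add: has_bochner_integral_iff left_diff_distrib)
  have "integrable \<mu> r"
    unfolding r_def
    using has_bochner_integral_RN_deriv[OF \<mu>.sigma_finite_measure_axioms \<nu>.finite_measure_axioms sets ac]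
    by (rule integrable.intros)
  then have L1: "integrable \<mu> (\<lambda>x. \<bar>r x - 1\<bar>)" by auto
  have "\<bar>measure \<nu> A - measure \<mu> A\<bar> \<le> (\<integral>x. \<bar>(r x - 1) * indicator A x\<bar> \<partial>\<mu>)"
    unfolding eq by (rule integral_abs_bound)
  also have "\<dots> \<le> (\<integral>x. \<bar>r x - 1\<bar> \<partial>\<mu>)"
    using int L1 by (intro integral_mono) (auto simp: indicator_def)
  finally show ?thesis by (simp add: r_def)
qed

lemma fdiv_ge_measure_diff:
  assumes hinge: "\<And>t. ereal (s * (t - 1) + c * (\<bar>t - 1\<bar> - d)) \<le> fext a b f t" and c: "0 \<le> c"
    and \<mu>: "prob_space \<mu>" and \<nu>: "prob_space \<nu>" and sets: "sets \<nu> = sets \<mu>"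
    and ac: "absolutely_continuous \<mu> \<nu>" and A: "A \<in> sets \<mu>"
  shows "ereal (c * (\<bar>measure \<nu> A - measure \<mu> A\<bar> - d)) \<le> fdiv a b f \<nu> \<mu>"
proof -
  interpret \<mu>: prob_space \<mu> by fact
  interpret \<nu>: prob_space \<nu> by fact
  define r where "r x = enn2real (RN_deriv \<mu> \<nu> x)" for x
  define L1 where "L1 = (\<integral>x. \<bar>r x - 1\<bar> \<partial>\<mu>)"
  have r: "has_bochner_integral \<mu> r 1"
    unfolding r_def
    using has_bochner_integral_RN_deriv[OF \<mu>.sigma_finite_measure_axioms \<nu>.finite_measure_axioms sets ac]
    by (simp add: \<nu>.prob_space)
  then have "integrable \<mu> r" by (rule integrable.intros)
  then have L1: "has_bochner_integral \<mu> (\<lambda>x. \<bar>r x - 1\<bar>) L1"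
    unfolding L1_def by (intro has_bochner_integral_integrable) auto
  have const: "has_bochner_integral \<mu> (\<lambda>_. k) k" for k :: real
    by (simp add: has_bochner_integral_iff \<mu>.prob_space)
  have "has_bochner_integral \<mu> (\<lambda>x. s * (r x - 1) + c * (\<bar>r x - 1\<bar> - d)) (s * (1 - 1) + c * (L1 - d))"
    by (intro has_bochner_integral_add has_bochner_integral_mult_right has_bochner_integral_diff
        r L1 const)
  then have "ereal (c * (L1 - d)) \<le> fdiv a b f \<nu> \<mu>"
    using fdiv_ge_integral[OF ac, of "\<lambda>x. s * (r x - 1) + c * (\<bar>r x - 1\<bar> - d)"] hinge
    by (simp add: has_bochner_integral_iff r_def)
  moreover have "\<bar>measure \<nu> A - measure \<mu> A\<bar> \<le> L1"
    unfolding L1_def r_def by (rule measure_diff_le_L1_RN_deriv[OF \<mu> \<nu> sets ac A])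
  then have "c * (\<bar>measure \<nu> A - measure \<mu> A\<bar> - d) \<le> c * (L1 - d)"
    using c by (intro mult_left_mono) auto
  ultimately show ?thesis by (metis ereal_less_eq(3) order_trans)
qed

lemma fdiv_tendsto_0_imp_measure_diff_tendsto_0:
  fixes \<mu> \<nu> :: "nat \<Rightarrow> 'a measure"
  assumes F: "F1 a b f" and strict: "\<exists>e>0. strictly_convex_on {1 - e<..<1 + e} f"
    and \<mu>: "\<And>n. prob_space (\<mu> n)" and \<nu>: "\<And>n. prob_space (\<nu> n)"
    and sets\<mu>: "\<And>n. sets (\<mu> n) = S" and sets\<nu>: "\<And>n. sets (\<nu> n) = S"
    and D: "(\<lambda>n. fdiv a b f (\<nu> n) (\<mu> n)) \<longlonglongrightarrow> 0" and A: "A \<in> S"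
  shows "(\<lambda>n. measure (\<nu> n) A - measure (\<mu> n) A) \<longlonglongrightarrow> 0"
  unfolding tendsto_iff dist_real_def
proof (intro allI impI)
  fix e :: real assume e: "0 < e"
  obtain s where "\<forall>d>0. \<exists>c>0. \<forall>t. ereal (s * (t - 1) + c * (\<bar>t - 1\<bar> - d)) \<le> fext a b f t"
    using F1_hinge_minorant[OF F strict] by blast
  then obtain c where c: "0 < c"
    and hinge: "\<And>t. ereal (s * (t - 1) + c * (\<bar>t - 1\<bar> - e / 2)) \<le> fext a b f t"
    using e by (meson half_gt_zero)
  have "0 < ereal (c * (e / 2))" using c e by simp
  then have "eventually (\<lambda>n. fdiv a b f (\<nu> n) (\<mu> n) < ereal (c * (e / 2))) sequentially"
    using order_tendstoD(2)[OF D] by (simp add: zero_ereal_def)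
  then show "eventually (\<lambda>n. \<bar>measure (\<nu> n) A - measure (\<mu> n) A - 0\<bar> < e) sequentially"
  proof eventually_elim
    case (elim n)
    then have "absolutely_continuous (\<mu> n) (\<nu> n)" by (auto simp: fdiv_def split: if_splits)
    then have "ereal (c * (\<bar>measure (\<nu> n) A - measure (\<mu> n) A\<bar> - e / 2)) \<le> fdiv a b f (\<nu> n) (\<mu> n)"
      using A sets\<mu> sets\<nu> c by (intro fdiv_ge_measure_diff[OF hinge _ \<mu> \<nu>]) auto
    then have "ereal (c * (\<bar>measure (\<nu> n) A - measure (\<mu> n) A\<bar> - e / 2)) < ereal (c * (e / 2))"
      using elim by (rule order.strict_trans1)
    then have "\<bar>measure (\<nu> n) A - measure (\<mu> n) A\<bar> - e / 2 < e / 2"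
      using mult_less_cancel_left_pos[OF c] by (simp only: less_ereal.simps)
    then show ?case by simp
  qed
qed

section \<open>From setwise to weak convergence\<close>

lemma integral_dist_le_uniform_dist:
  fixes g q :: "'a \<Rightarrow> real"
  assumes Q: "prob_space Q" and g: "integrable Q g" and q: "integrable Q q"
    and close: "\<And>x. x \<in> space Q \<Longrightarrow> \<bar>g x - q x\<bar> \<le> \<eta>"
  shows "\<bar>(\<integral>x. g x \<partial>Q) - (\<integral>x. q x \<partial>Q)\<bar> \<le> \<eta>"
proof -
  interpret Q: prob_space Q by fact
  have "\<bar>(\<integral>x. g x \<partial>Q) - (\<integral>x. q x \<partial>Q)\<bar> = \<bar>\<integral>x. g x - q x \<partial>Q\<bar>"
    using g q by simp
  also have "\<dots> \<le> (\<integral>x. \<bar>g x - q x\<bar> \<partial>Q)" by (rule integral_abs_bound)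
  also have "\<dots> \<le> (\<integral>x. \<eta> \<partial>Q)" using g q close by (intro integral_mono) auto
  also have "\<dots> = \<eta>" by (simp add: Q.prob_space)
  finally show ?thesis .
qed

lemma has_bochner_integral_floor_step:
  fixes g :: "'a \<Rightarrow> real" and \<eta> :: real
  assumes Q: "finite_measure Q" and g: "g \<in> borel_measurable Q"
    and M: "\<And>x. x \<in> space Q \<Longrightarrow> \<bar>g x\<bar> \<le> M" and \<eta>: "0 < \<eta>"
  shows "has_bochner_integral Q (\<lambda>x. \<eta> * of_int \<lfloor>g x / \<eta>\<rfloor>)
    (\<Sum>k\<in>{\<lfloor>- M / \<eta>\<rfloor>..\<lfloor>M / \<eta>\<rfloor>}. \<eta> * of_int k * measure Q {x\<in>space Q. \<lfloor>g x / \<eta>\<rfloor> = k})"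
proof -
  interpret Q: finite_measure Q by fact
  define K where "K = {\<lfloor>- M / \<eta>\<rfloor>..\<lfloor>M / \<eta>\<rfloor>}"
  define E where "E k = {x\<in>space Q. \<lfloor>g x / \<eta>\<rfloor> = k}" for k
  have E: "E k \<in> sets Q" for k unfolding E_def using g by measurable
  have step: "\<eta> * of_int \<lfloor>g x / \<eta>\<rfloor> = (\<Sum>k\<in>K. indicator (E k) x * (\<eta> * of_int k))"
    if x: "x \<in> space Q" for x
  proof -
    have "- M \<le> g x" "g x \<le> M" using M[OF x] by (auto simp: abs_le_iff)
    then have "- M / \<eta> \<le> g x / \<eta>" "g x / \<eta> \<le> M / \<eta>"
      using \<eta> divide_right_mono[of "- M" "g x" \<eta>] divide_right_mono[of "g x" M \<eta>] by simp_all
    then have "\<lfloor>g x / \<eta>\<rfloor> \<in> K" unfolding K_def by (auto intro: floor_mono)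
    then show ?thesis by (simp add: E_def indicator_def x sum.delta[OF finite_atLeastAtMost_int] K_def)
  qed
  have indicator: "has_bochner_integral Q (\<lambda>x. indicator (E k) x * (\<eta> * of_int k))
      (measure Q (E k) * (\<eta> * of_int k))" for k
  proof -
    have fin: "emeasure Q (E k) < \<infinity>" using Q.emeasure_finite[of "E k"] by (simp add: less_top[symmetric])
    show ?thesis using has_bochner_integral_indicator[OF E fin, of "\<eta> * of_int k"] by simp
  qed
  have "has_bochner_integral Q (\<lambda>x. \<Sum>k\<in>K. indicator (E k) x * (\<eta> * of_int k))
      (\<Sum>k\<in>K. measure Q (E k) * (\<eta> * of_int k))"
    by (intro has_bochner_integral_sum indicator)
  then have "has_bochner_integral Q (\<lambda>x. \<eta> * of_int \<lfloor>g x / \<eta>\<rfloor>)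
      (\<Sum>k\<in>K. measure Q (E k) * (\<eta> * of_int k))"
    by (rule has_bochner_integral_cong[OF refl _ refl, THEN iffD1, rotated]) (simp add: step)
  then show ?thesis by (simp add: K_def E_def mult_ac)
qed


lemma setwise_tendsto_imp_integral_tendsto:
  fixes g :: "'a \<Rightarrow> real"
  assumes P: "prob_space P" and Pn: "\<And>n. prob_space (Pn n)" and sets: "\<And>n. sets (Pn n) = sets P"
    and setwise: "\<And>A. A \<in> sets P \<Longrightarrow> (\<lambda>n. measure (Pn n) A) \<longlonglongrightarrow> measure P A"
    and g: "g \<in> borel_measurable P" and M: "\<And>x. x \<in> space P \<Longrightarrow> \<bar>g x\<bar> \<le> M"
  shows "(\<lambda>n. \<integral>x. g x \<partial>Pn n) \<longlonglongrightarrow> (\<integral>x. g x \<partial>P)"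
  unfolding tendsto_iff
proof (intro allI impI)
  fix e :: real assume e: "0 < e"
  define \<eta> where "\<eta> = e / 3"
  have \<eta>: "0 < \<eta>" using e by (simp add: \<eta>_def)
  define K where "K = {\<lfloor>- M / \<eta>\<rfloor>..\<lfloor>M / \<eta>\<rfloor>}"
  define E where "E k = {x\<in>space P. \<lfloor>g x / \<eta>\<rfloor> = k}" for k
  define S where "S Q = (\<Sum>k\<in>K. \<eta> * of_int k * measure Q (E k))" for Q
  have approx: "\<bar>(\<integral>x. g x \<partial>Q) - S Q\<bar> \<le> \<eta>" if Q: "prob_space Q" "sets Q = sets P" for Q
  proof -
    interpret Q: prob_space Q by (rule Q(1))
    have space: "space Q = space P" using Q(2) by (rule sets_eq_imp_space_eq)
    have gQ: "g \<in> borel_measurable Q" unfolding measurable_cong_sets[OF Q(2) refl] by (rule g)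
    have MQ: "\<And>x. x \<in> space Q \<Longrightarrow> \<bar>g x\<bar> \<le> M" using M space by simp
    have q: "has_bochner_integral Q (\<lambda>x. \<eta> * of_int \<lfloor>g x / \<eta>\<rfloor>) (S Q)"
      using has_bochner_integral_floor_step[OF Q.finite_measure_axioms gQ MQ \<eta>]
      by (simp add: S_def K_def E_def space)
    have "integrable Q g" using gQ MQ by (intro Q.integrable_const_bound[where B = M]) auto
    moreover have "\<bar>g x - \<eta> * of_int \<lfloor>g x / \<eta>\<rfloor>\<bar> \<le> \<eta>" for x
      using floor_divide_lower[OF \<eta>, of "g x"] floor_divide_upper[OF \<eta>, of "g x"]
      by (simp add: abs_le_iff algebra_simps)
    ultimately show ?thesis
      using integral_dist_le_uniform_dist[OF Q(1) _ integrable.intros[OF q]]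
        has_bochner_integral_integral_eq[OF q] by simp
  qed
  have "E k \<in> sets P" for k unfolding E_def using g by measurable
  then have "(\<lambda>n. S (Pn n)) \<longlonglongrightarrow> S P"
    unfolding S_def by (intro tendsto_intros setwise)
  then have "eventually (\<lambda>n. dist (S (Pn n)) (S P) < \<eta>) sequentially"
    using \<eta> by (simp add: tendsto_iff)
  then show "eventually (\<lambda>n. dist (\<integral>x. g x \<partial>Pn n) (\<integral>x. g x \<partial>P) < e) sequentially"
  proof eventually_elim
    case (elim n)
    have "dist (\<integral>x. g x \<partial>Pn n) (\<integral>x. g x \<partial>P)
        \<le> dist (\<integral>x. g x \<partial>Pn n) (S (Pn n)) + dist (S (Pn n)) (\<integral>x. g x \<partial>P)"
      "dist (S (Pn n)) (\<integral>x. g x \<partial>P) \<le> dist (S (Pn n)) (S P) + dist (S P) (\<integral>x. g x \<partial>P)"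
      by (rule dist_triangle)+
    moreover have "dist (\<integral>x. g x \<partial>Pn n) (S (Pn n)) \<le> \<eta>" "dist (S P) (\<integral>x. g x \<partial>P) \<le> \<eta>"
      using approx[OF P refl] approx[OF Pn sets, of n] by (simp_all add: dist_real_def abs_minus_commute)
    ultimately show ?case using elim \<eta>_def by linarith
  qed
qed

lemma continuous_map_measurable_metric_borel:
  fixes g :: "'a \<Rightarrow> real"
  assumes ms: "Metric_space (space M) d" and sets: "sets M = metric_borel_sets (space M) d"
    and g: "continuous_map (Metric_space.mtopology (space M) d) euclideanreal g"
  shows "g \<in> borel_measurable M"
proof (rule borel_measurableI)
  interpret Metric_space "space M" d by (rule ms)
  fix S :: "real set" assume "open S"
  then have "openin euclideanreal S" by (metis open_openin)
  then have "openin mtopology {x \<in> topspace mtopology. g x \<in> S}"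
    by (rule openin_continuous_map_preimage[OF g])
  moreover have "g -` S \<inter> space M = {x \<in> topspace mtopology. g x \<in> S}" by auto
  ultimately show "g -` S \<inter> space M \<in> sets M"
    unfolding sets metric_borel_sets_def by (auto intro: sigma_sets.Basic)
qed

lemma fdiv_tendsto_0_imp_setwise_tendsto:
  assumes F: "F1 a b f" and strict: "\<exists>e>0. strictly_convex_on {1 - e<..<1 + e} f"
    and P: "prob_space P" and Pn: "\<And>n. prob_space (Pn n)" and sets: "\<And>n. sets (Pn n) = sets P"
    and D: "(\<lambda>n. fdiv a b f (Pn n) P) \<longlonglongrightarrow> 0 \<or> (\<lambda>n. fdiv a b f P (Pn n)) \<longlonglongrightarrow> 0"
    and A: "A \<in> sets P"
  shows "(\<lambda>n. measure (Pn n) A) \<longlonglongrightarrow> measure P A"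
  using D
proof
  assume "(\<lambda>n. fdiv a b f (Pn n) P) \<longlonglongrightarrow> 0"
  then have "(\<lambda>n. measure (Pn n) A - measure P A) \<longlonglongrightarrow> 0"
    using fdiv_tendsto_0_imp_measure_diff_tendsto_0[where \<mu> = "\<lambda>_. P" and \<nu> = Pn,
        OF F strict P Pn refl sets _ A] by blast
  then show ?thesis by (rule LIM_zero_cancel)
next
  assume "(\<lambda>n. fdiv a b f P (Pn n)) \<longlonglongrightarrow> 0"
  then have "(\<lambda>n. measure P A - measure (Pn n) A) \<longlonglongrightarrow> 0"
    using fdiv_tendsto_0_imp_measure_diff_tendsto_0[where \<mu> = Pn and \<nu> = "\<lambda>_. P",
        OF F strict Pn P sets refl _ A] by blast
  then have "(\<lambda>n. measure (Pn n) A - measure P A) \<longlonglongrightarrow> 0"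
    using tendsto_minus by fastforce
  then show ?thesis by (rule LIM_zero_cancel)
qed

lemma setwise_tendsto_imp_weak_conv_metric:
  assumes P: "prob_space P" and Pn: "\<And>n. prob_space (Pn n)" and sets: "\<And>n. sets (Pn n) = sets P"
    and setwise: "\<And>A. A \<in> sets P \<Longrightarrow> (\<lambda>n. measure (Pn n) A) \<longlonglongrightarrow> measure P A"
    and ms: "Metric_space (space P) d" and borel: "sets P = metric_borel_sets (space P) d"
  shows "weak_conv_metric (space P) d Pn P"
  unfolding weak_conv_metric_def
proof (intro allI impI, elim conjE)
  fix g :: "'a \<Rightarrow> real"
  assume g: "continuous_map (Metric_space.mtopology (space P) d) euclideanreal g"
    and "bounded (g ` space P)"
  then obtain M where "\<And>x. x \<in> space P \<Longrightarrow> \<bar>g x\<bar> \<le> M" unfolding bounded_real by blast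
  then show "(\<lambda>n. \<integral>x. g x \<partial>Pn n) \<longlonglongrightarrow> (\<integral>x. g x \<partial>P)"
    by (intro setwise_tendsto_imp_integral_tendsto[OF P Pn sets setwise]
        continuous_map_measurable_metric_borel[OF ms borel g])
qed

theorem theorem10:
  fixes a b :: ereal and f :: "real \<Rightarrow> real"
    and P :: "'a measure" and Pn :: "nat \<Rightarrow> 'a measure"
  assumes hF: "F1 a b f"
    and hw0: "right_deriv f 1 \<in> interior {y. legendre a b f y < \<infinity>}"
    and hstrict: "\<exists>e>0. strictly_convex_on {1 - e<..<1 + e} f"
    and hP: "prob_space P"
    and hPn: "\<And>n. prob_space (Pn n)"
    and hsets: "\<And>n. sets (Pn n) = sets P"
    and hconv: "(\<lambda>n. fdiv a b f (Pn n) P) \<longlonglongrightarrow> 0 \<or> (\<lambda>n. fdiv a b f P (Pn n)) \<longlonglongrightarrow> 0"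
  shows "(\<forall>A\<in>sets P. (\<lambda>n. measure (Pn n) A) \<longlonglongrightarrow> measure P A)
       \<and> (\<forall>d. Metric_space (space P) d \<and> sets P = metric_borel_sets (space P) d
             \<longrightarrow> weak_conv_metric (space P) d Pn P)"
proof -
  have setwise: "(\<lambda>n. measure (Pn n) A) \<longlonglongrightarrow> measure P A" if "A \<in> sets P" for A
    using fdiv_tendsto_0_imp_setwise_tendsto[OF hF hstrict hP hPn hsets hconv that] .
  then show ?thesis
    using setwise_tendsto_imp_weak_conv_metric[OF hP hPn hsets setwise] by blast
qed

end
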